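(* Let $T>0$, $I=[0,T]$, $\nu_1,\nu_2\in\mathbb{R}$, $p>1$. Let $\Phi:\mathbb{R}\to\mathbb{R}$ be a strictly increasing homeomorphism; let $A:W^{1,p}(I)\to C(I,\mathbb{R})$, $x\mapsto A_x$, be continuous w.r.t. the uniform topology, with $h_1,h_2\in C(I,\mathbb{R})$, $h_1,h_2\ge0$, $1/h_1,1/h_2\in L^p(I)$ and $h_1\le A_x\le h_2$ on $I$ for all $x$; let $F:W^{1,p}(I)\to L^1(I)$ be continuous with $|F_x(t)|\le\psi(t)$ for all $x$ and a.e. $t$, for some non-negative $\psi\in L^1(I)$. Then the operator $\mathcal{P}:W^{1,p}(I)\to W^{1,p}(I)$ defined in the context is continuous (with respect to the $W^{1,p}$ norm).
   Context: $\mathcal{F}_x(t):=\int_0^tF_x(s)\,ds$. For $x\in W^{1,p}(I)$, $\xi_x$ is the unique real number with $\int_0^T\frac{1}{A_x(t)}\Phi^{-1}(\xi_x+\mathcal{F}_x(t))\,dt=\nu_2-\nu_1$ (it exists and is unique under these hypotheses). $\mathcal{P}_x(t):=\nu_1+\int_0^t\frac{1}{A_x(s)}\Phi^{-1}(\xi_x+\mathcal{F}_x(s))\,ds$. *)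

theory Defs
  imports "HOL-Analysis.Analysis"
begin

text \<open>Functions on I = [0,T] are represented as total functions real \<Rightarrow> real;
  only their values on {0..T} matter.\<close>

definition Lp :: "real \<Rightarrow> real \<Rightarrow> (real \<Rightarrow> real) \<Rightarrow> bool" where
  "Lp T p g \<longleftrightarrow> set_borel_measurable lborel {0..T} g \<and>
      set_integrable lborel {0..T} (\<lambda>t. \<bar>g t\<bar> powr p)"

definition Lp_norm :: "real \<Rightarrow> real \<Rightarrow> (real \<Rightarrow> real) \<Rightarrow> real" where
  "Lp_norm T p g = (LINT t:{0..T}|lborel. \<bar>g t\<bar> powr p) powr (1 / p)"

text \<open>W^{1,p}(I): (continuous representatives of) functions that are primitives of an L^p function.\<close>
definition is_wderiv :: "real \<Rightarrow> real \<Rightarrow> (real \<Rightarrow> real) \<Rightarrow> (real \<Rightarrow> real) \<Rightarrow> bool" where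
  "is_wderiv T p x g \<longleftrightarrow> Lp T p g \<and>
      (\<forall>t\<in>{0..T}. x t = x 0 + (LINT s:{0..t}|lborel. g s))"

definition W1p :: "real \<Rightarrow> real \<Rightarrow> (real \<Rightarrow> real) \<Rightarrow> bool" where
  "W1p T p x \<longleftrightarrow> (\<exists>g. is_wderiv T p x g)"

definition wderiv :: "real \<Rightarrow> real \<Rightarrow> (real \<Rightarrow> real) \<Rightarrow> (real \<Rightarrow> real)" where
  "wderiv T p x = (SOME g. is_wderiv T p x g)"

definition W1p_norm :: "real \<Rightarrow> real \<Rightarrow> (real \<Rightarrow> real) \<Rightarrow> real" where
  "W1p_norm T p x = Lp_norm T p x + Lp_norm T p (wderiv T p x)"

definition L1_norm :: "real \<Rightarrow> (real \<Rightarrow> real) \<Rightarrow> real" where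
  "L1_norm T g = (LINT t:{0..T}|lborel. \<bar>g t\<bar>)"

definition calF :: "((real \<Rightarrow> real) \<Rightarrow> (real \<Rightarrow> real)) \<Rightarrow> (real \<Rightarrow> real) \<Rightarrow> real \<Rightarrow> real" where
  "calF F x t = (LINT s:{0..t}|lborel. F x s)"

definition xi :: "real \<Rightarrow> (real \<Rightarrow> real) \<Rightarrow> ((real \<Rightarrow> real) \<Rightarrow> (real \<Rightarrow> real))
    \<Rightarrow> ((real \<Rightarrow> real) \<Rightarrow> (real \<Rightarrow> real)) \<Rightarrow> real \<Rightarrow> real \<Rightarrow> (real \<Rightarrow> real) \<Rightarrow> real" where
  "xi T \<Phi> A F \<nu>1 \<nu>2 x = (THE \<xi>.
     (LINT t:{0..T}|lborel. (1 / A x t) * inv \<Phi> (\<xi> + calF F x t)) = \<nu>2 - \<nu>1)"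

definition calP :: "real \<Rightarrow> (real \<Rightarrow> real) \<Rightarrow> ((real \<Rightarrow> real) \<Rightarrow> (real \<Rightarrow> real))
    \<Rightarrow> ((real \<Rightarrow> real) \<Rightarrow> (real \<Rightarrow> real)) \<Rightarrow> real \<Rightarrow> real \<Rightarrow> (real \<Rightarrow> real) \<Rightarrow> real \<Rightarrow> real" where
  "calP T \<Phi> A F \<nu>1 \<nu>2 x t = \<nu>1 +
     (LINT s:{0..t}|lborel. (1 / A x s) * inv \<Phi> (xi T \<Phi> A F \<nu>1 \<nu>2 x + calF F x s))"

end

theory Submission
  imports Defs
begin

text \<open>For fixed \<open>x\<close> the shooting function \<open>c \<mapsto> \<integral>\<^sub>0\<^sup>T inv \<Phi> (c + \<F>\<^sub>x) / A\<^sub>x\<close> is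
  continuous and strictly increasing, and it is onto because \<open>|\<F>\<^sub>x| \<le> \<integral>\<psi>\<close> and \<open>1/h\<^sub>2\<close> has
  positive integral; hence \<open>\<xi>\<^sub>x\<close> exists and \<open>\<P>\<^sub>x\<close> is a primitive of
  \<open>inv \<Phi> (\<xi>\<^sub>x + \<F>\<^sub>x) / A\<^sub>x\<close>. All these integrands are dominated by a constant multiple
  of \<open>1/h\<^sub>1 \<in> L\<^sup>p\<close>, the constant depending only on a bound for \<open>c\<close>.
  If \<open>y\<^sub>n \<rightarrow> x\<close> in \<open>W\<^sup>1\<^sup>,\<^sup>p\<close>, then \<open>A\<^sub>y\<^sub>n \<rightarrow> A\<^sub>x\<close> and \<open>\<F>\<^sub>y\<^sub>n \<rightarrow> \<F>\<^sub>x\<close> pointwise.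
  Dominated convergence makes the shooting functions converge pointwise, monotonicity turns
  this into \<open>\<xi>\<^sub>y\<^sub>n \<rightarrow> \<xi>\<^sub>x\<close>, and a second application of dominated convergence shows that the
  derivative of \<open>\<P>\<^sub>y\<^sub>n - \<P>\<^sub>x\<close> tends to \<open>0\<close> in \<open>L\<^sup>1\<close> and in \<open>L\<^sup>p\<close>. Since this difference
  vanishes at \<open>0\<close>, its sup norm is at most the \<open>L\<^sup>1\<close> norm of its derivative, so
  \<open>\<P>\<^sub>y\<^sub>n \<rightarrow> \<P>\<^sub>x\<close> in \<open>W\<^sup>1\<^sup>,\<^sup>p\<close>; continuity follows from the sequential characterisation.\<close>

section \<open>Analysis on an interval\<close>

lemma set_borel_measurable_iff_restrict_space:
  "set_borel_measurable lborel {a..b::real} f \<longleftrightarrow>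
     (f :: real \<Rightarrow> real) \<in> borel_measurable (restrict_space lborel {a..b})"
  unfolding set_borel_measurable_def
  using borel_measurable_restrict_space_iff[of "{a..b}" lborel f] by simp

lemma continuous_on_imp_borel_measurable_restrict_space:
  "continuous_on {a..b::real} f \<Longrightarrow> (f :: real \<Rightarrow> real) \<in> borel_measurable (restrict_space lborel {a..b})"
  by (metis borel_measurable_continuous_on_restrict measurable_cong_sets sets_lborel
      sets_restrict_space_cong)

lemma set_integrable_const_Icc: "set_integrable lborel {a..b::real} (\<lambda>_. c :: real)"
proof -
  have "set_integrable lborel {a..b} (\<lambda>_. 1 :: real)"
    unfolding set_integrable_def
    by (simp add: integrable_indicator_iff[symmetric] emeasure_lborel_Icc_eq)
  then have "set_integrable lborel {a..b} (\<lambda>_. c * 1)"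
    by (rule set_integrable_mult_right)
  then show ?thesis by simp
qed

lemma set_integral_singleton: "(LINT s:{a}|lborel. (f s :: real)) = 0"
  unfolding set_lebesgue_integral_def
  by (rule integral_eq_zero_AE) (use AE_lborel_singleton[of a] in \<open>auto elim!: eventually_mono\<close>)

lemma set_integral_nonneg: "(\<And>t. 0 \<le> f t) \<Longrightarrow> 0 \<le> (LINT t:S|M. (f t :: real))"
  unfolding set_lebesgue_integral_def by (rule integral_nonneg_AE) (auto simp: indicator_def)

lemma Lp_norm_nonneg: "0 \<le> Lp_norm T p g"
  unfolding Lp_norm_def by simp

lemma W1p_norm_nonneg: "0 \<le> W1p_norm T p x"
  unfolding W1p_norm_def by (intro add_nonneg_nonneg Lp_norm_nonneg)

lemma Lp_imp_set_integrable:
  assumes "p \<ge> 1" "Lp T p g"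
  shows "set_integrable lborel {0..T} g"
proof -
  have m: "set_borel_measurable lborel {0..T} g"
    and i: "set_integrable lborel {0..T} (\<lambda>t. \<bar>g t\<bar> powr p)"
    using assms(2) unfolding Lp_def by auto
  have "\<bar>u\<bar> \<le> 1 + \<bar>u\<bar> powr p" for u :: real
  proof (cases "\<bar>u\<bar> \<le> 1")
    case False
    then have "\<bar>u\<bar> powr 1 \<le> \<bar>u\<bar> powr p" using assms(1) by (intro powr_mono) auto
    then show ?thesis using False by simp
  qed (use powr_ge_zero[of "\<bar>u\<bar>" p] in linarith)
  then have "norm (g t) \<le> norm (1 + \<bar>g t\<bar> powr p)" for t
    by (smt (verit) powr_ge_zero real_norm_def)
  moreover have "set_integrable lborel {0..T} (\<lambda>t. 1 + \<bar>g t\<bar> powr p)"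
    using set_integral_add(1)[OF set_integrable_const_Icc i] by simp
  ultimately show ?thesis by (intro set_integrable_bound[OF _ m]) auto
qed

lemma Lp_imp_Lp_one:
  assumes "p \<ge> 1" "Lp T p g"
  shows "Lp T 1 g"
  using assms Lp_imp_set_integrable[OF assms] unfolding Lp_def
  by (auto intro: set_integrable_abs)

lemma Lp_cmult:
  assumes "Lp T p g"
  shows "Lp T p (\<lambda>t. c * g t)"
proof -
  have [measurable]: "g \<in> borel_measurable (restrict_space lborel {0..T})"
    using assms unfolding Lp_def set_borel_measurable_iff_restrict_space by simp
  have "set_borel_measurable lborel {0..T} (\<lambda>t. c * g t)"
    unfolding set_borel_measurable_iff_restrict_space by measurable
  moreover have "set_integrable lborel {0..T} (\<lambda>t. \<bar>c\<bar> powr p * \<bar>g t\<bar> powr p)"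
    using assms unfolding Lp_def by (auto intro: set_integrable_mult_right)
  ultimately show ?thesis
    unfolding Lp_def by (simp add: abs_mult powr_mult)
qed

lemma Lp_dominated:
  assumes m: "f \<in> borel_measurable (restrict_space lborel {0..T})" and p: "p > 0"
    and g: "Lp T p g" and bound: "AE t in lborel. t \<in> {0..T} \<longrightarrow> \<bar>f t\<bar> \<le> g t"
  shows "Lp T p f"
proof -
  have "set_borel_measurable lborel {0..T} (\<lambda>t. \<bar>f t\<bar> powr p)"
    using m unfolding set_borel_measurable_iff_restrict_space by measurable
  moreover have "AE t in lborel. t \<in> {0..T} \<longrightarrow> norm (\<bar>f t\<bar> powr p) \<le> norm (\<bar>g t\<bar> powr p)"
    using bound by eventually_elim (use p in \<open>auto intro!: powr_mono2\<close>)
  ultimately have "set_integrable lborel {0..T} (\<lambda>t. \<bar>f t\<bar> powr p)"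
    using g unfolding Lp_def by (blast intro: set_integrable_bound)
  then show ?thesis
    using m unfolding Lp_def set_borel_measurable_iff_restrict_space by blast
qed

lemma Lp_diff:
  assumes p: "p > 0" and g: "Lp T p g" and h: "Lp T p h"
  shows "Lp T p (\<lambda>t. g t - h t)"
proof -
  have mg: "g \<in> borel_measurable (restrict_space lborel {0..T})"
    and mh: "h \<in> borel_measurable (restrict_space lborel {0..T})"
    using g h unfolding Lp_def set_borel_measurable_iff_restrict_space by auto
  have "\<bar>u - v\<bar> powr p \<le> 2 powr p * (\<bar>u\<bar> powr p + \<bar>v\<bar> powr p)" for u v :: real
  proof -
    have "\<bar>u - v\<bar> \<le> 2 * max \<bar>u\<bar> \<bar>v\<bar>" by linarith
    then have "\<bar>u - v\<bar> powr p \<le> (2 * max \<bar>u\<bar> \<bar>v\<bar>) powr p" using p by (intro powr_mono2) auto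
    also have "\<dots> = 2 powr p * max \<bar>u\<bar> \<bar>v\<bar> powr p" by (simp add: powr_mult)
    also have "\<dots> \<le> 2 powr p * (\<bar>u\<bar> powr p + \<bar>v\<bar> powr p)"
      by (intro mult_left_mono) (auto simp: max_def)
    finally show ?thesis .
  qed
  moreover have "set_integrable lborel {0..T} (\<lambda>t. 2 powr p * (\<bar>g t\<bar> powr p + \<bar>h t\<bar> powr p))"
    using g h unfolding Lp_def by (intro set_integrable_mult_right set_integral_add(1)) auto
  moreover have "set_borel_measurable lborel {0..T} (\<lambda>t. \<bar>g t - h t\<bar> powr p)"
    using mg mh unfolding set_borel_measurable_iff_restrict_space by measurable
  ultimately have "set_integrable lborel {0..T} (\<lambda>t. \<bar>g t - h t\<bar> powr p)"
    by (elim set_integrable_bound) auto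
  moreover have "set_borel_measurable lborel {0..T} (\<lambda>t. g t - h t)"
    using mg mh unfolding set_borel_measurable_iff_restrict_space by measurable
  ultimately show ?thesis unfolding Lp_def by blast
qed

lemma continuous_on_indefinite_set_integral:
  assumes "set_integrable lborel {0..T} (f :: real \<Rightarrow> real)"
  shows "continuous_on {0..T} (\<lambda>t. LINT s:{0..t}|lborel. f s)"
proof -
  have "continuous_on {0..T} (\<lambda>t. integral {0..t} f)"
    using set_borel_integral_eq_integral(1)[OF assms] by (rule indefinite_integral_continuous_1)
  moreover have "(LINT s:{0..t}|lborel. f s) = integral {0..t} f" if "t \<in> {0..T}" for t
    using that by (intro set_borel_integral_eq_integral(2) set_integrable_subset[OF assms]) auto
  ultimately show ?thesis using continuous_on_cong by (metis (no_types, lifting))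
qed

lemma abs_indefinite_set_integral_le:
  assumes g: "set_integrable lborel {0..T} (g :: real \<Rightarrow> real)" and t: "t \<in> {0..T}"
  shows "\<bar>LINT s:{0..t}|lborel. g s\<bar> \<le> (LINT s:{0..T}|lborel. \<bar>g s\<bar>)"
proof -
  have gt: "set_integrable lborel {0..t} g" using t by (intro set_integrable_subset[OF g]) auto
  have "\<bar>LINT s:{0..t}|lborel. g s\<bar> \<le> (LINT s:{0..t}|lborel. \<bar>g s\<bar>)"
    using set_integral_norm_bound[OF gt] by simp
  also have "\<dots> \<le> (LINT s:{0..T}|lborel. \<bar>g s\<bar>)"
    using set_integrable_abs[OF gt] set_integrable_abs[OF g] t
    unfolding set_lebesgue_integral_def set_integrable_def
    by (intro integral_mono) (auto simp: indicator_def)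
  finally show ?thesis .
qed

lemma set_integral_pos_AE:
  assumes T: "T > 0" and d: "set_integrable lborel {0..T} (d :: real \<Rightarrow> real)"
    and pos: "AE t in lborel. t \<in> {0..T} \<longrightarrow> d t > 0"
  shows "(LINT t:{0..T}|lborel. d t) > 0"
proof -
  have "(LINT t:{0..T}|lborel. d t) \<ge> 0"
    unfolding set_lebesgue_integral_def
    by (rule integral_nonneg_AE) (use pos in \<open>auto elim!: eventually_mono simp: indicator_def\<close>)
  moreover have "(LINT t:{0..T}|lborel. d t) \<noteq> 0"
  proof
    assume zero: "(LINT t:{0..T}|lborel. d t) = 0"
    have "{0..T} \<in> null_sets lborel"
    proof (rule null_if_pos_func_has_zero_int[where f = "\<lambda>t. indicator {0..T} t * d t"])
      show "integrable lborel (\<lambda>t. indicator {0..T} t * d t)"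
        using d unfolding set_integrable_def by simp
      show "AE t\<in>{0..T} in lborel. 0 < indicator {0..T} t * d t"
        using pos by (auto elim!: eventually_mono)
      have "(\<lambda>t. indicator {0..T} t *\<^sub>R (indicator {0..T} t * d t)) = (\<lambda>t. indicator {0..T} t *\<^sub>R d t)"
        by (auto simp: indicator_def)
      then show "(LINT t:{0..T}|lborel. indicator {0..T} t * d t) = 0"
        using zero unfolding set_lebesgue_integral_def by simp
    qed auto
    then show False using T by (auto simp: emeasure_lborel_Icc_eq null_sets_def)
  qed
  ultimately show ?thesis by linarith
qed

text \<open>The densities of the positive and negative parts of \<open>u\<close> agree on all rays \<open>{x<..}\<close>,
  hence coincide by uniqueness of measures.\<close>

lemma AE_zero_if_integrals_greaterThan_zero:
  fixes u :: "real \<Rightarrow> real"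
  assumes u: "integrable lborel u" and rays: "\<And>x. (LINT t:{x<..}|lborel. u t) = 0"
  shows "AE t in lborel. u t = 0"
proof -
  define P where "P t = max (u t) 0" for t
  define N where "N t = max (- u t) 0" for t
  have iP: "integrable lborel P" and iN: "integrable lborel N"
    unfolding P_def N_def using u by auto
  then have [measurable]: "P \<in> borel_measurable lborel" "N \<in> borel_measurable lborel" by auto
  have density_ray: "emeasure (density lborel f) {x<..} = ennreal (LINT t:{x<..}|lborel. f t)"
    if "integrable lborel f" "\<And>t. f t \<ge> 0" for f and x :: real
  proof -
    have [measurable]: "f \<in> borel_measurable lborel" using that by auto
    have "emeasure (density lborel f) {x<..} = (\<integral>\<^sup>+ t. ennreal (indicator {x<..} t * f t) \<partial>lborel)"
      by (subst emeasure_density) (auto intro!: nn_integral_cong simp: indicator_def)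
    also have "\<dots> = ennreal (LINT t:{x<..}|lborel. f t)"
      using that unfolding set_lebesgue_integral_def
      by (subst nn_integral_eq_integral)
         (auto intro!: integrable_mult_indicator[where 'b=real, simplified])
    finally show ?thesis .
  qed
  have "(LINT t:{x<..}|lborel. P t) = (LINT t:{x<..}|lborel. N t)" for x
  proof -
    have "set_integrable lborel {x<..} P" "set_integrable lborel {x<..} N"
      using iP iN unfolding set_integrable_def
      by (auto intro!: integrable_mult_indicator[where 'b=real, simplified])
    moreover have "(LINT t:{x<..}|lborel. u t) = (LINT t:{x<..}|lborel. P t - N t)"
      by (rule arg_cong[where f = "set_lebesgue_integral lborel _"]) (auto simp: P_def N_def)
    ultimately show ?thesis using rays[of x] by (simp add: set_integral_diff)
  qed
  then have "density lborel P = density lborel N"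
    using density_ray[OF iP] density_ray[OF iN]
    by (intro measure_eqI_lessThan) (auto simp: P_def N_def)
  then have "AE t in lborel. ennreal (P t) = ennreal (N t)"
    by (intro sigma_finite_measure.density_unique[OF sigma_finite_lborel]) auto
  then show ?thesis
    by (rule eventually_mono) (auto simp: P_def N_def max_def split: if_splits)
qed

lemma AE_zero_if_indefinite_integrals_zero:
  fixes \<phi> :: "real \<Rightarrow> real"
  assumes T: "0 \<le> T" and \<phi>: "set_integrable lborel {0..T} \<phi>"
    and zero: "\<forall>t\<in>{0..T}. (LINT s:{0..t}|lborel. \<phi> s) = 0"
  shows "AE t in lborel. t \<in> {0..T} \<longrightarrow> \<phi> t = 0"
proof -
  define u where "u t = indicator {0..T} t * \<phi> t" for t
  have "(LINT t:{x<..}|lborel. u t) = 0" for x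
  proof (cases "0 \<le> x \<and> x < T")
    case True
    have "(\<lambda>t. indicator {x<..} t * u t) = (\<lambda>t. indicator {0..T} t * \<phi> t - indicator {0..x} t * \<phi> t)"
      using True by (auto simp: u_def indicator_def)
    moreover have "set_integrable lborel {0..x} \<phi>"
      using True by (intro set_integrable_subset[OF \<phi>]) auto
    ultimately have "(LINT t:{x<..}|lborel. u t) = (LINT t:{0..T}|lborel. \<phi> t) - (LINT t:{0..x}|lborel. \<phi> t)"
      using \<phi> by (simp add: set_lebesgue_integral_def set_integrable_def)
    then show ?thesis using zero True T by simp
  next
    case False
    then have "(\<lambda>t. indicator {x<..} t * u t) =
               (if x < 0 then (\<lambda>t. indicator {0..T} t * \<phi> t) else (\<lambda>_. 0))"
      by (auto simp: u_def indicator_def)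
    then show ?thesis using zero T by (simp add: set_lebesgue_integral_def)
  qed
  moreover have "integrable lborel u" using \<phi> unfolding u_def set_integrable_def by simp
  ultimately have "AE t in lborel. u t = 0" by (intro AE_zero_if_integrals_greaterThan_zero)
  then show ?thesis by (rule eventually_mono) (simp add: u_def indicator_def)
qed

lemma Lp_tendsto_dominated:
  fixes f :: "nat \<Rightarrow> real \<Rightarrow> real" and f0 B :: "real \<Rightarrow> real"
  assumes q: "q > 0"
    and mf: "\<And>n. f n \<in> borel_measurable (restrict_space lborel {0..T})"
    and mf0: "f0 \<in> borel_measurable (restrict_space lborel {0..T})"
    and B: "Lp T q B" and bound: "\<And>n. AE t in lborel. t \<in> {0..T} \<longrightarrow> \<bar>f n t\<bar> \<le> B t"
    and lim: "AE t in lborel. t \<in> {0..T} \<longrightarrow> (\<lambda>n. f n t) \<longlonglongrightarrow> f0 t"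
  shows "(\<lambda>n. LINT t:{0..T}|lborel. \<bar>f n t - f0 t\<bar> powr q) \<longlonglongrightarrow> 0"
proof -
  let ?s = "\<lambda>n t. indicator {0..T} t *\<^sub>R \<bar>f n t - f0 t\<bar> powr q"
  let ?w = "\<lambda>t. indicator {0..T} t *\<^sub>R (2 powr q * \<bar>B t\<bar> powr q)"
  have "(\<lambda>n. integral\<^sup>L lborel (?s n)) \<longlonglongrightarrow> integral\<^sup>L lborel (\<lambda>_ :: real. 0 :: real)"
  proof (rule integral_dominated_convergence[where w = ?w and s = ?s and f = "\<lambda>_. 0"])
    show "?s n \<in> borel_measurable lborel" for n
    proof -
      have "(\<lambda>t. \<bar>f n t - f0 t\<bar> powr q) \<in> borel_measurable (restrict_space lborel {0..T})"
        using mf[of n] mf0 by measurable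
      then show ?thesis by (subst (asm) borel_measurable_restrict_space_iff) auto
    qed
    show "integrable lborel ?w"
      using B unfolding Lp_def set_integrable_def
      by (simp add: mult.left_commute[of "indicator _ _"])
    have "AE t in lborel. \<forall>n. t \<in> {0..T} \<longrightarrow> \<bar>f n t\<bar> \<le> B t"
      by (subst AE_all_countable) (use bound in blast)
    then show "AE t in lborel. norm (?s n t) \<le> ?w t" for n
      using lim
    proof eventually_elim
      case (elim t)
      show ?case
      proof (cases "t \<in> {0..T}")
        case True
        then have "\<bar>f0 t\<bar> \<le> B t"
          using elim by (intro tendsto_le[OF _ tendsto_const tendsto_rabs]) auto
        moreover have "\<bar>f n t\<bar> \<le> B t" using elim True by blast
        ultimately have "\<bar>f n t - f0 t\<bar> \<le> 2 * \<bar>B t\<bar>" by linarith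
        then have "\<bar>f n t - f0 t\<bar> powr q \<le> (2 * \<bar>B t\<bar>) powr q" using q by (intro powr_mono2) auto
        then show ?thesis using True by (simp add: powr_mult)
      qed simp
    qed
    show "AE t in lborel. (\<lambda>n. ?s n t) \<longlonglongrightarrow> 0"
      using lim
    proof eventually_elim
      case (elim t)
      show ?case
      proof (cases "t \<in> {0..T}")
        case True
        then have "(\<lambda>n. \<bar>f n t - f0 t\<bar>) \<longlonglongrightarrow> 0"
          using elim by (simp add: LIM_zero tendsto_rabs_zero)
        then have "(\<lambda>n. \<bar>f n t - f0 t\<bar> powr q) \<longlonglongrightarrow> 0"
          using q by (intro tendsto_zero_powrI) auto
        then show ?thesis using True by simp
      qed simp
    qed
  qed simp
  then show ?thesis by (simp add: set_lebesgue_integral_def)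
qed

lemma Lp_norm_le_const:
  assumes m: "z \<in> borel_measurable (restrict_space lborel {0..T})" and T: "T \<ge> 0" and p: "p > 0"
    and bound: "\<forall>t\<in>{0..T}. \<bar>z t\<bar> \<le> M"
  shows "Lp_norm T p z \<le> T powr (1 / p) * M"
proof -
  have M: "M \<ge> 0" using bound T by force
  have "set_borel_measurable lborel {0..T} (\<lambda>t. \<bar>z t\<bar> powr p)"
    using m unfolding set_borel_measurable_iff_restrict_space by measurable
  moreover have le: "\<bar>z t\<bar> powr p \<le> M powr p" if "t \<in> {0..T}" for t
    using bound that p by (intro powr_mono2) auto
  ultimately have "set_integrable lborel {0..T} (\<lambda>t. \<bar>z t\<bar> powr p)"
    by (intro set_integrable_bound[OF set_integrable_const_Icc[of 0 T "M powr p"]] AE_I2) auto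
  then have "(LINT t:{0..T}|lborel. \<bar>z t\<bar> powr p) \<le> (LINT t:{0..T}|lborel. M powr p)"
    using le by (intro set_integral_mono set_integrable_const_Icc)
  also have "\<dots> = T * M powr p" using T by (simp add: set_integral_const)
  finally have "Lp_norm T p z \<le> (T * M powr p) powr (1 / p)"
    unfolding Lp_norm_def using p by (intro powr_mono2) (auto intro: set_integral_nonneg)
  also have "\<dots> = T powr (1 / p) * M"
    using T M p by (simp add: powr_mult powr_powr)
  finally show ?thesis .
qed

text \<open>The weak derivative is only determined almost everywhere, so \<open>wderiv\<close> may pick
  a representative other than \<open>g\<close>; its norm is the same.\<close>

lemma Lp_norm_wderiv_eq:
  assumes g: "is_wderiv T p z g" and p: "p \<ge> 1" and T: "T \<ge> 0"
  shows "Lp_norm T p (wderiv T p z) = Lp_norm T p g"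
proof -
  define h where "h = wderiv T p z"
  have h: "is_wderiv T p z h"
    unfolding h_def wderiv_def using someI_ex[of "is_wderiv T p z"] g by blast
  have ig: "set_integrable lborel {0..T} g" and ih: "set_integrable lborel {0..T} h"
    using g h p Lp_imp_set_integrable unfolding is_wderiv_def by blast+
  have "(LINT s:{0..t}|lborel. h s - g s) = 0" if t: "t \<in> {0..T}" for t
  proof -
    have "set_integrable lborel {0..t} h" "set_integrable lborel {0..t} g"
      using t by (auto intro: set_integrable_subset[OF ih] set_integrable_subset[OF ig])
    then have "(LINT s:{0..t}|lborel. h s - g s) = (LINT s:{0..t}|lborel. h s) - (LINT s:{0..t}|lborel. g s)"
      by (rule set_integral_diff(2))
    moreover have "z t = z 0 + (LINT s:{0..t}|lborel. g s)" "z t = z 0 + (LINT s:{0..t}|lborel. h s)"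
      using g h t unfolding is_wderiv_def by blast+
    ultimately show ?thesis by simp
  qed
  then have "AE t in lborel. t \<in> {0..T} \<longrightarrow> h t - g t = 0"
    using set_integral_diff(1)[OF ih ig] by (intro AE_zero_if_indefinite_integrals_zero[OF T]) auto
  have meas: "(\<lambda>t. indicator {0..T} t *\<^sub>R \<bar>f t\<bar> powr p) \<in> borel_measurable lborel"
    if "is_wderiv T p z f" for f
    using that unfolding is_wderiv_def Lp_def set_integrable_def by (blast intro: borel_measurable_integrable)
  from \<open>AE t in lborel. t \<in> {0..T} \<longrightarrow> h t - g t = 0\<close>
  have "AE t in lborel. indicator {0..T} t *\<^sub>R \<bar>h t\<bar> powr p = indicator {0..T} t *\<^sub>R \<bar>g t\<bar> powr p"
    by (rule eventually_mono) (auto simp: indicator_def)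
  then show ?thesis
    unfolding Lp_norm_def h_def[symmetric] set_lebesgue_integral_def
    by (subst integral_cong_AE[OF meas[OF h] meas[OF g]]) auto
qed

lemma is_wderiv_diff:
  assumes u: "is_wderiv T p u g" and v: "is_wderiv T p v h" and p: "p \<ge> 1"
  shows "is_wderiv T p (\<lambda>t. u t - v t) (\<lambda>t. g t - h t)"
proof -
  have ig: "set_integrable lborel {0..T} g" and ih: "set_integrable lborel {0..T} h"
    using u v p Lp_imp_set_integrable unfolding is_wderiv_def by blast+
  have int_diff: "(LINT s:{0..t}|lborel. g s - h s) = (LINT s:{0..t}|lborel. g s) - (LINT s:{0..t}|lborel. h s)"
    if "t \<in> {0..T}" for t
    using that by (intro set_integral_diff(2) set_integrable_subset[OF ig] set_integrable_subset[OF ih]) auto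
  have "Lp T p (\<lambda>t. g t - h t)"
    using u v p unfolding is_wderiv_def by (intro Lp_diff) auto
  moreover have "u t - v t = (u 0 - v 0) + (LINT s:{0..t}|lborel. g s - h s)" if "t \<in> {0..T}" for t
  proof -
    have "u t = u 0 + (LINT s:{0..t}|lborel. g s)" "v t = v 0 + (LINT s:{0..t}|lborel. h s)"
      using u v that unfolding is_wderiv_def by blast+
    then show ?thesis using int_diff[OF that] by simp
  qed
  ultimately show ?thesis unfolding is_wderiv_def by blast
qed

lemma W1p_norm_le:
  assumes z: "is_wderiv T p z g" and z0: "z 0 = 0" and p: "p \<ge> 1" and T: "T \<ge> 0"
  shows "W1p_norm T p z \<le> T powr (1 / p) * L1_norm T g + Lp_norm T p g"
proof -
  have g: "set_integrable lborel {0..T} g"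
    using z p Lp_imp_set_integrable unfolding is_wderiv_def by blast
  have z_eq: "\<forall>t\<in>{0..T}. z t = (LINT s:{0..t}|lborel. g s)"
    using z z0 unfolding is_wderiv_def by simp
  have "continuous_on {0..T} z"
    using continuous_on_indefinite_set_integral[OF g] z_eq by (metis (no_types, lifting) continuous_on_cong)
  moreover have "\<forall>t\<in>{0..T}. \<bar>z t\<bar> \<le> L1_norm T g"
    using z_eq abs_indefinite_set_integral_le[OF g] unfolding L1_norm_def by simp
  ultimately have "Lp_norm T p z \<le> T powr (1 / p) * L1_norm T g"
    using T p by (intro Lp_norm_le_const continuous_on_imp_borel_measurable_restrict_space) auto
  then show ?thesis
    unfolding W1p_norm_def Lp_norm_wderiv_eq[OF z p T] by simp
qed

lemma eps_delta_if_sequentially: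
  fixes d e :: "'a \<Rightarrow> real"
  assumes seq: "\<And>y. (\<And>n. S (y n)) \<Longrightarrow> (\<lambda>n. d (y n)) \<longlonglongrightarrow> 0 \<Longrightarrow> (\<lambda>n. e (y n)) \<longlonglongrightarrow> 0"
    and d_nonneg: "\<And>y. S y \<Longrightarrow> 0 \<le> d y" and \<epsilon>: "\<epsilon> > 0"
  shows "\<exists>\<delta>>0. \<forall>y. S y \<and> d y < \<delta> \<longrightarrow> e y < \<epsilon>"
proof (rule ccontr)
  assume "\<not> ?thesis"
  moreover have "1 / real (Suc n) > 0" for n by simp
  ultimately have "\<forall>n. \<exists>y. S y \<and> d y < 1 / Suc n \<and> \<not> e y < \<epsilon>"
    by blast
  then obtain y where y: "\<And>n. S (y n)" "\<And>n. d (y n) < 1 / Suc n" "\<And>n. \<not> e (y n) < \<epsilon>"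
    by metis
  have "(\<lambda>n. d (y n)) \<longlonglongrightarrow> 0"
  proof (rule tendsto_sandwich[where f = "\<lambda>_. 0" and h = "\<lambda>n. 1 / Suc n"])
    show "\<forall>\<^sub>F n in sequentially. 0 \<le> d (y n)" using d_nonneg[OF y(1)] by simp
    show "\<forall>\<^sub>F n in sequentially. d (y n) \<le> 1 / Suc n" using y(2) by (simp add: less_imp_le)
    show "(\<lambda>n. 1 / real (Suc n)) \<longlonglongrightarrow> 0" by (rule LIMSEQ_Suc[OF lim_inverse_n'])
  qed simp
  then have "(\<lambda>n. e (y n)) \<longlonglongrightarrow> 0" using y(1) by (rule seq[rotated])
  then have "eventually (\<lambda>n. e (y n) < \<epsilon>) sequentially" using \<epsilon> by (rule order_tendstoD)
  then show False using y(3) by (auto dest: eventually_happens)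
qed

lemma tendsto_root_if_tendsto_mono:
  fixes G :: "nat \<Rightarrow> real \<Rightarrow> real" and g :: "real \<Rightarrow> real"
  assumes mono: "\<And>n. mono (G n)" and g: "strict_mono g"
    and lim: "\<And>a. (\<lambda>n. G n a) \<longlonglongrightarrow> g a"
    and root: "\<And>n. G n (c n) = v" and root0: "g c0 = v"
  shows "c \<longlonglongrightarrow> c0"
proof (rule order_tendstoI)
  fix a assume "a < c0"
  then have "g a < v" using g root0 by (auto dest: strict_monoD)
  then have "eventually (\<lambda>n. G n a < v) sequentially" by (rule order_tendstoD(2)[OF lim])
  then show "eventually (\<lambda>n. a < c n) sequentially"
    by (rule eventually_mono) (metis root mono monoD not_le order.strict_iff_not)
next
  fix a assume "c0 < a"
  then have "v < g a" using g root0 by (auto dest: strict_monoD)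
  then have "eventually (\<lambda>n. v < G n a) sequentially" by (rule order_tendstoD(1)[OF lim])
  then show "eventually (\<lambda>n. c n < a) sequentially"
    by (rule eventually_mono) (metis root mono monoD not_le order.strict_iff_not)
qed

section \<open>The shooting function\<close>

text \<open>The hypotheses of the theorem, except continuity of \<open>h1\<close>, \<open>h2\<close> and the sign conditions
  on \<open>h1\<close>, \<open>h2\<close>, \<open>\<psi>\<close>, which the proof does not need.\<close>

locale calP_setting =
  fixes T p \<nu>1 \<nu>2 :: real
    and \<Phi> :: "real \<Rightarrow> real"
    and A F :: "(real \<Rightarrow> real) \<Rightarrow> (real \<Rightarrow> real)"
    and h1 h2 \<psi> :: "real \<Rightarrow> real"
  assumes T: "T > 0" and p: "p > 1"
    and Phi_mono: "strict_mono \<Phi>"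
    and Phi_homeo: "homeomorphism UNIV UNIV \<Phi> (inv \<Phi>)"
    and A_cont_fun: "\<And>x. W1p T p x \<Longrightarrow> continuous_on {0..T} (A x)"
    and A_cont: "\<And>x \<epsilon>. W1p T p x \<Longrightarrow> \<epsilon> > 0 \<Longrightarrow> \<exists>\<delta>>0. \<forall>y. W1p T p y \<and>
                   W1p_norm T p (\<lambda>t. y t - x t) < \<delta> \<longrightarrow> (\<forall>t\<in>{0..T}. \<bar>A y t - A x t\<bar> < \<epsilon>)"
    and h1_pos: "AE t in lborel. t \<in> {0..T} \<longrightarrow> h1 t > 0"
    and h2_pos: "AE t in lborel. t \<in> {0..T} \<longrightarrow> h2 t > 0"
    and h1_inv: "Lp T p (\<lambda>t. 1 / h1 t)" and h2_inv: "Lp T p (\<lambda>t. 1 / h2 t)"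
    and A_bounds: "\<And>x t. W1p T p x \<Longrightarrow> t \<in> {0..T} \<Longrightarrow> h1 t \<le> A x t \<and> A x t \<le> h2 t"
    and F_L1: "\<And>x. W1p T p x \<Longrightarrow> set_integrable lborel {0..T} (F x)"
    and F_cont: "\<And>x \<epsilon>. W1p T p x \<Longrightarrow> \<epsilon> > 0 \<Longrightarrow> \<exists>\<delta>>0. \<forall>y. W1p T p y \<and>
                   W1p_norm T p (\<lambda>t. y t - x t) < \<delta> \<longrightarrow> L1_norm T (\<lambda>t. F y t - F x t) < \<epsilon>"
    and psi_L1: "set_integrable lborel {0..T} \<psi>"
    and F_bound: "\<And>x. W1p T p x \<Longrightarrow> AE t in lborel. t \<in> {0..T} \<longrightarrow> \<bar>F x t\<bar> \<le> \<psi> t"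
begin

abbreviation \<xi> where "\<xi> x \<equiv> xi T \<Phi> A F \<nu>1 \<nu>2 x"
abbreviation P where "P x \<equiv> calP T \<Phi> A F \<nu>1 \<nu>2 x"

definition integrand :: "(real \<Rightarrow> real) \<Rightarrow> real \<Rightarrow> real \<Rightarrow> real" where
  "integrand x c s = 1 / A x s * inv \<Phi> (c + calF F x s)"

definition shoot :: "(real \<Rightarrow> real) \<Rightarrow> real \<Rightarrow> real" where
  "shoot x c = (LINT t:{0..T}|lborel. integrand x c t)"

definition psi_integral :: real where
  "psi_integral = (LINT t:{0..T}|lborel. \<psi> t)"

definition invPhi_bound :: "real \<Rightarrow> real" where
  "invPhi_bound R = max \<bar>inv \<Phi> (- R)\<bar> \<bar>inv \<Phi> R\<bar>"

lemma inv_Phi_Phi [simp]: "inv \<Phi> (\<Phi> a) = a"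
  using Phi_homeo unfolding homeomorphism_def by simp

lemma invPhi_strict_mono: "strict_mono (inv \<Phi>)"
  using Phi_homeo unfolding homeomorphism_def by (intro strict_mono_inv[OF Phi_mono]) auto

lemma isCont_invPhi: "isCont (inv \<Phi>) u"
  using Phi_homeo unfolding homeomorphism_def by (simp add: continuous_on_eq_continuous_at)

lemma abs_invPhi_le: "\<bar>u\<bar> \<le> R \<Longrightarrow> \<bar>inv \<Phi> u\<bar> \<le> invPhi_bound R"
  using strict_mono_less_eq[OF invPhi_strict_mono, of "- R" u]
    strict_mono_less_eq[OF invPhi_strict_mono, of u R]
  unfolding invPhi_bound_def by linarith

lemma inv_A_bounds:
  assumes "W1p T p x" "t \<in> {0..T}" "h1 t > 0"
  shows "0 < A x t" "0 < 1 / h2 t" "1 / h2 t \<le> 1 / A x t" "1 / A x t \<le> 1 / h1 t"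
  using A_bounds[OF assms(1,2)] assms(3) by (auto intro: divide_left_mono)

lemma abs_calF_le:
  assumes x: "W1p T p x" and t: "t \<in> {0..T}"
  shows "\<bar>calF F x t\<bar> \<le> psi_integral"
proof -
  have "\<bar>calF F x t\<bar> \<le> (LINT s:{0..T}|lborel. \<bar>F x s\<bar>)"
    unfolding calF_def by (rule abs_indefinite_set_integral_le[OF F_L1[OF x] t])
  also have "\<dots> \<le> psi_integral"
    unfolding psi_integral_def using F_bound[OF x]
    by (intro set_integral_mono_AE[OF set_integrable_abs[OF F_L1[OF x]] psi_L1]) auto
  finally show ?thesis .
qed

lemma abs_calF_diff_le:
  assumes x: "W1p T p x" and y: "W1p T p y" and t: "t \<in> {0..T}"
  shows "\<bar>calF F y t - calF F x t\<bar> \<le> L1_norm T (\<lambda>t. F y t - F x t)"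
proof -
  have "calF F y t - calF F x t = (LINT s:{0..t}|lborel. F y s - F x s)"
    unfolding calF_def using t
    by (intro set_integral_diff(2)[symmetric] set_integrable_subset[OF F_L1[OF y]]
        set_integrable_subset[OF F_L1[OF x]]) auto
  then show ?thesis
    using abs_indefinite_set_integral_le[OF set_integral_diff(1)[OF F_L1[OF y] F_L1[OF x]] t]
    unfolding L1_norm_def by simp
qed

lemma integrand_measurable:
  assumes x: "W1p T p x"
  shows "integrand x c \<in> borel_measurable (restrict_space lborel {0..T})"
proof -
  have [measurable]: "A x \<in> borel_measurable (restrict_space lborel {0..T})"
    "calF F x \<in> borel_measurable (restrict_space lborel {0..T})"
    using A_cont_fun[OF x] continuous_on_indefinite_set_integral[OF F_L1[OF x]]
    unfolding calF_def[abs_def] by (auto intro: continuous_on_imp_borel_measurable_restrict_space)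
  have [measurable]: "inv \<Phi> \<in> borel_measurable borel"
    using isCont_invPhi by (intro borel_measurable_continuous_onI continuous_at_imp_continuous_on) auto
  show ?thesis unfolding integrand_def[abs_def] by measurable
qed

lemma integrand_bound:
  assumes x: "W1p T p x" and c: "\<bar>c\<bar> \<le> C"
  shows "AE t in lborel. t \<in> {0..T} \<longrightarrow> \<bar>integrand x c t\<bar> \<le> invPhi_bound (C + psi_integral) * (1 / h1 t)"
  using h1_pos
proof (rule eventually_mono, intro impI)
  fix t assume "t \<in> {0..T} \<longrightarrow> 0 < h1 t" and t: "t \<in> {0..T}"
  then have h1: "0 < h1 t" by simp
  have "\<bar>c + calF F x t\<bar> \<le> C + psi_integral" using abs_calF_le[OF x t] c by linarith
  then have "\<bar>inv \<Phi> (c + calF F x t)\<bar> \<le> invPhi_bound (C + psi_integral)" by (rule abs_invPhi_le)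
  moreover have "0 < 1 / A x t" "1 / A x t \<le> 1 / h1 t" using inv_A_bounds[OF x t h1] by auto
  ultimately show "\<bar>integrand x c t\<bar> \<le> invPhi_bound (C + psi_integral) * (1 / h1 t)"
    unfolding integrand_def abs_mult by (subst mult.commute) (intro mult_mono; simp)
qed

lemma Lp_integrand: "W1p T p x \<Longrightarrow> Lp T p (integrand x c)"
  using p by (intro Lp_dominated[OF integrand_measurable _ Lp_cmult[OF h1_inv] integrand_bound]) auto

lemma integrable_integrand: "W1p T p x \<Longrightarrow> set_integrable lborel {0..T} (integrand x c)"
  using p by (intro Lp_imp_set_integrable[of p] Lp_integrand) auto

lemma shoot_strict_mono:
  assumes x: "W1p T p x"
  shows "strict_mono (shoot x)"
proof (rule strict_monoI)
  fix c1 c2 :: real assume "c1 < c2"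
  have "0 < (LINT t:{0..T}|lborel. integrand x c2 t - integrand x c1 t)"
  proof (rule set_integral_pos_AE[OF T])
    show "set_integrable lborel {0..T} (\<lambda>t. integrand x c2 t - integrand x c1 t)"
      by (rule set_integral_diff(1)[OF integrable_integrand[OF x] integrable_integrand[OF x]])
    show "AE t in lborel. t \<in> {0..T} \<longrightarrow> 0 < integrand x c2 t - integrand x c1 t"
      using h1_pos
    proof (rule eventually_mono, intro impI)
      fix t assume "t \<in> {0..T} \<longrightarrow> 0 < h1 t" and t: "t \<in> {0..T}"
      then have "0 < A x t" using inv_A_bounds[OF x t] by simp
      moreover have "inv \<Phi> (c1 + calF F x t) < inv \<Phi> (c2 + calF F x t)"
        using \<open>c1 < c2\<close> by (intro strict_monoD[OF invPhi_strict_mono]) simp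
      ultimately show "0 < integrand x c2 t - integrand x c1 t"
        unfolding integrand_def by (simp add: divide_strict_right_mono)
    qed
  qed
  also have "\<dots> = shoot x c2 - shoot x c1"
    unfolding shoot_def by (intro set_integral_diff(2) integrable_integrand[OF x])
  finally show "shoot x c1 < shoot x c2" by simp
qed

lemma integrand_tendsto_Lq:
  assumes x: "W1p T p x" and y: "\<And>n. W1p T p (y n)"
    and A_lim: "\<And>t. t \<in> {0..T} \<Longrightarrow> (\<lambda>n. A (y n) t) \<longlonglongrightarrow> A x t"
    and calF_lim: "\<And>t. t \<in> {0..T} \<Longrightarrow> (\<lambda>n. calF F (y n) t) \<longlonglongrightarrow> calF F x t"
    and c: "c \<longlonglongrightarrow> c0" and q: "q > 0" and h1_q: "Lp T q (\<lambda>t. 1 / h1 t)"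
  shows "(\<lambda>n. LINT t:{0..T}|lborel. \<bar>integrand (y n) (c n) t - integrand x c0 t\<bar> powr q) \<longlonglongrightarrow> 0"
proof -
  obtain C where C: "\<And>n. \<bar>c n\<bar> \<le> C"
    using convergent_imp_Bseq[OF convergentI[OF c]] unfolding Bseq_def by auto
  show ?thesis
  proof (rule Lp_tendsto_dominated[OF q integrand_measurable[OF y] integrand_measurable[OF x],
        where B = "\<lambda>t. invPhi_bound (C + psi_integral) * (1 / h1 t)"])
    show "Lp T q (\<lambda>t. invPhi_bound (C + psi_integral) * (1 / h1 t))" by (rule Lp_cmult[OF h1_q])
    show "AE t in lborel. t \<in> {0..T} \<longrightarrow>
            \<bar>integrand (y n) (c n) t\<bar> \<le> invPhi_bound (C + psi_integral) * (1 / h1 t)" for n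
      by (rule integrand_bound[OF y C])
    show "AE t in lborel. t \<in> {0..T} \<longrightarrow> (\<lambda>n. integrand (y n) (c n) t) \<longlonglongrightarrow> integrand x c0 t"
      using h1_pos
    proof (rule eventually_mono, intro impI)
      fix t assume "t \<in> {0..T} \<longrightarrow> 0 < h1 t" and t: "t \<in> {0..T}"
      then have "A x t \<noteq> 0" using inv_A_bounds[OF x t] by force
      then show "(\<lambda>n. integrand (y n) (c n) t) \<longlonglongrightarrow> integrand x c0 t"
        unfolding integrand_def
        by (intro tendsto_intros A_lim[OF t] isCont_tendsto_compose[OF isCont_invPhi] c calF_lim[OF t])
    qed
  qed
qed

lemma abs_shoot_diff_le:
  assumes x: "W1p T p x" and y: "W1p T p y"
  shows "\<bar>shoot y c - shoot x c'\<bar> \<le> L1_norm T (\<lambda>t. integrand y c t - integrand x c' t)"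
proof -
  have "shoot y c - shoot x c' = (LINT t:{0..T}|lborel. integrand y c t - integrand x c' t)"
    unfolding shoot_def by (intro set_integral_diff(2)[symmetric] integrable_integrand x y)
  then show ?thesis
    using set_integral_norm_bound[OF set_integral_diff(1)[OF integrable_integrand[OF y] integrable_integrand[OF x]]]
    unfolding L1_norm_def by simp
qed

lemma shoot_tendsto:
  assumes x: "W1p T p x" and y: "\<And>n. W1p T p (y n)"
    and A_lim: "\<And>t. t \<in> {0..T} \<Longrightarrow> (\<lambda>n. A (y n) t) \<longlonglongrightarrow> A x t"
    and calF_lim: "\<And>t. t \<in> {0..T} \<Longrightarrow> (\<lambda>n. calF F (y n) t) \<longlonglongrightarrow> calF F x t"
    and c: "c \<longlonglongrightarrow> c0"
  shows "(\<lambda>n. shoot (y n) (c n)) \<longlonglongrightarrow> shoot x c0"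
proof -
  have "(\<lambda>n. L1_norm T (\<lambda>t. integrand (y n) (c n) t - integrand x c0 t)) \<longlonglongrightarrow> 0"
    using integrand_tendsto_Lq[OF x y A_lim calF_lim c zero_less_one Lp_imp_Lp_one[OF _ h1_inv]] p
    unfolding L1_norm_def by simp
  then have "(\<lambda>n. shoot (y n) (c n) - shoot x c0) \<longlonglongrightarrow> 0"
    by (rule Lim_null_comparison[rotated]) (simp add: abs_shoot_diff_le x y)
  then show ?thesis by (simp add: LIM_zero_iff)
qed

lemma continuous_on_shoot: "W1p T p x \<Longrightarrow> continuous_on S (shoot x)"
  by (intro continuous_on_sequentiallyI shoot_tendsto) auto

lemma integral_inv_h2_pos: "0 < (LINT t:{0..T}|lborel. 1 / h2 t)"
  using p h2_pos by (intro set_integral_pos_AE[OF T] Lp_imp_set_integrable[OF _ h2_inv]) auto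

lemma shoot_lower_bound:
  assumes x: "W1p T p x" and R: "R \<ge> 0"
  shows "R * (LINT t:{0..T}|lborel. 1 / h2 t) \<le> shoot x (\<Phi> R + psi_integral)"
proof -
  have "R * (LINT t:{0..T}|lborel. 1 / h2 t) = (LINT t:{0..T}|lborel. R * (1 / h2 t))"
    by (rule set_integral_mult_right[symmetric])
  also have "\<dots> \<le> shoot x (\<Phi> R + psi_integral)"
    unfolding shoot_def
  proof (rule set_integral_mono_AE)
    show "set_integrable lborel {0..T} (\<lambda>t. R * (1 / h2 t))"
      using p by (intro set_integrable_mult_right Lp_imp_set_integrable[OF _ h2_inv]) auto
    show "set_integrable lborel {0..T} (integrand x (\<Phi> R + psi_integral))"
      by (rule integrable_integrand[OF x])
    show "AE t\<in>{0..T} in lborel. R * (1 / h2 t) \<le> integrand x (\<Phi> R + psi_integral) t"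
      using h1_pos
    proof (rule eventually_mono, intro impI)
      fix t assume "t \<in> {0..T} \<longrightarrow> 0 < h1 t" and t: "t \<in> {0..T}"
      then have A: "0 < 1 / h2 t" "1 / h2 t \<le> 1 / A x t" using inv_A_bounds[OF x t] by auto
      have "\<Phi> R \<le> \<Phi> R + psi_integral + calF F x t" using abs_calF_le[OF x t] by linarith
      then have "R \<le> inv \<Phi> (\<Phi> R + psi_integral + calF F x t)"
        using strict_mono_less_eq[OF invPhi_strict_mono] by (metis inv_Phi_Phi)
      then have "R * (1 / h2 t) \<le> inv \<Phi> (\<Phi> R + psi_integral + calF F x t) * (1 / A x t)"
        using A R by (intro mult_mono) auto
      then show "R * (1 / h2 t) \<le> integrand x (\<Phi> R + psi_integral) t"
        unfolding integrand_def by (simp add: mult.commute)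
    qed
  qed
  finally show ?thesis .
qed

lemma shoot_upper_bound:
  assumes x: "W1p T p x" and R: "R \<ge> 0"
  shows "shoot x (\<Phi> (- R) - psi_integral) \<le> - R * (LINT t:{0..T}|lborel. 1 / h2 t)"
proof -
  have "shoot x (\<Phi> (- R) - psi_integral) \<le> (LINT t:{0..T}|lborel. - R * (1 / h2 t))"
    unfolding shoot_def
  proof (rule set_integral_mono_AE)
    show "set_integrable lborel {0..T} (\<lambda>t. - R * (1 / h2 t))"
      using p by (intro set_integrable_mult_right Lp_imp_set_integrable[OF _ h2_inv]) auto
    show "set_integrable lborel {0..T} (integrand x (\<Phi> (- R) - psi_integral))"
      by (rule integrable_integrand[OF x])
    show "AE t\<in>{0..T} in lborel. integrand x (\<Phi> (- R) - psi_integral) t \<le> - R * (1 / h2 t)"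
      using h1_pos
    proof (rule eventually_mono, intro impI)
      fix t assume "t \<in> {0..T} \<longrightarrow> 0 < h1 t" and t: "t \<in> {0..T}"
      then have A: "0 < 1 / h2 t" "1 / h2 t \<le> 1 / A x t" using inv_A_bounds[OF x t] by auto
      have "\<Phi> (- R) - psi_integral + calF F x t \<le> \<Phi> (- R)" using abs_calF_le[OF x t] by linarith
      then have "inv \<Phi> (\<Phi> (- R) - psi_integral + calF F x t) \<le> - R"
        using strict_mono_less_eq[OF invPhi_strict_mono] by (metis inv_Phi_Phi)
      then have "R * (1 / h2 t) \<le> - inv \<Phi> (\<Phi> (- R) - psi_integral + calF F x t) * (1 / A x t)"
        using A R by (intro mult_mono) auto
      then show "integrand x (\<Phi> (- R) - psi_integral) t \<le> - R * (1 / h2 t)"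
        unfolding integrand_def by (simp add: mult.commute)
    qed
  qed
  also have "\<dots> = - R * (LINT t:{0..T}|lborel. 1 / h2 t)"
    by (rule set_integral_mult_right)
  finally show ?thesis .
qed

lemma shoot_surj:
  assumes x: "W1p T p x"
  shows "\<exists>c. shoot x c = v"
proof -
  define J where "J = (LINT t:{0..T}|lborel. 1 / h2 t)"
  define R where "R = \<bar>v\<bar> / J"
  have J: "J > 0" unfolding J_def by (rule integral_inv_h2_pos)
  then have R: "R \<ge> 0" "R * J = \<bar>v\<bar>" unfolding R_def by auto
  define lo where "lo = \<Phi> (- R) - psi_integral"
  define hi where "hi = \<Phi> R + psi_integral"
  have "shoot x lo \<le> v" "v \<le> shoot x hi"
    using shoot_upper_bound[OF x R(1)] shoot_lower_bound[OF x R(1)] R(2)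
    unfolding lo_def hi_def J_def[symmetric] by auto
  moreover from this have "lo \<le> hi"
    using strict_mono_less_eq[OF shoot_strict_mono[OF x]] by (metis order.trans)
  ultimately show ?thesis using IVT'[OF _ _ _ continuous_on_shoot[OF x]] by blast
qed

lemma shoot_xi:
  assumes x: "W1p T p x"
  shows "shoot x (\<xi> x) = \<nu>2 - \<nu>1"
proof -
  have "\<exists>!c. shoot x c = \<nu>2 - \<nu>1"
  proof (rule ex_ex1I)
    show "\<exists>c. shoot x c = \<nu>2 - \<nu>1" by (rule shoot_surj[OF x])
  qed (metis strict_mono_eq[OF shoot_strict_mono[OF x]])
  then have "shoot x (THE c. shoot x c = \<nu>2 - \<nu>1) = \<nu>2 - \<nu>1" by (rule theI')
  then show ?thesis unfolding xi_def shoot_def integrand_def .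
qed

section \<open>Continuity of \<open>\<P>\<close>\<close>

lemma A_tendsto:
  assumes x: "W1p T p x" and y: "\<And>n. W1p T p (y n)"
    and lim: "(\<lambda>n. W1p_norm T p (\<lambda>t. y n t - x t)) \<longlonglongrightarrow> 0" and t: "t \<in> {0..T}"
  shows "(\<lambda>n. A (y n) t) \<longlonglongrightarrow> A x t"
proof (rule tendstoI)
  fix \<epsilon> :: real assume "\<epsilon> > 0"
  then obtain \<delta> where "\<delta> > 0" and \<delta>: "\<forall>z. W1p T p z \<and> W1p_norm T p (\<lambda>t. z t - x t) < \<delta> \<longrightarrow>
      (\<forall>t\<in>{0..T}. \<bar>A z t - A x t\<bar> < \<epsilon>)"
    using A_cont[OF x] by blast
  from lim \<open>\<delta> > 0\<close> have "eventually (\<lambda>n. W1p_norm T p (\<lambda>t. y n t - x t) < \<delta>) sequentially"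
    by (rule order_tendstoD)
  then show "eventually (\<lambda>n. dist (A (y n) t) (A x t) < \<epsilon>) sequentially"
    by (rule eventually_mono) (use \<delta> y t in \<open>simp add: dist_real_def\<close>)
qed

lemma calF_tendsto:
  assumes x: "W1p T p x" and y: "\<And>n. W1p T p (y n)"
    and lim: "(\<lambda>n. W1p_norm T p (\<lambda>t. y n t - x t)) \<longlonglongrightarrow> 0" and t: "t \<in> {0..T}"
  shows "(\<lambda>n. calF F (y n) t) \<longlonglongrightarrow> calF F x t"
proof (rule tendstoI)
  fix \<epsilon> :: real assume "\<epsilon> > 0"
  then obtain \<delta> where "\<delta> > 0" and \<delta>: "\<forall>z. W1p T p z \<and> W1p_norm T p (\<lambda>t. z t - x t) < \<delta> \<longrightarrow>
      L1_norm T (\<lambda>t. F z t - F x t) < \<epsilon>"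
    using F_cont[OF x] by blast
  from lim \<open>\<delta> > 0\<close> have "eventually (\<lambda>n. W1p_norm T p (\<lambda>t. y n t - x t) < \<delta>) sequentially"
    by (rule order_tendstoD)
  then show "eventually (\<lambda>n. dist (calF F (y n) t) (calF F x t) < \<epsilon>) sequentially"
  proof (rule eventually_mono)
    fix n assume "W1p_norm T p (\<lambda>t. y n t - x t) < \<delta>"
    then have "L1_norm T (\<lambda>t. F (y n) t - F x t) < \<epsilon>" using \<delta> y by blast
    then show "dist (calF F (y n) t) (calF F x t) < \<epsilon>"
      using abs_calF_diff_le[OF x y t, of n] by (simp add: dist_real_def)
  qed
qed

lemma xi_tendsto:
  assumes x: "W1p T p x" and y: "\<And>n. W1p T p (y n)"
    and lim: "(\<lambda>n. W1p_norm T p (\<lambda>t. y n t - x t)) \<longlonglongrightarrow> 0"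
  shows "(\<lambda>n. \<xi> (y n)) \<longlonglongrightarrow> \<xi> x"
proof (rule tendsto_root_if_tendsto_mono[where G = "\<lambda>n. shoot (y n)" and g = "shoot x"])
  show "mono (shoot (y n))" for n by (rule strict_mono_mono[OF shoot_strict_mono[OF y]])
  show "strict_mono (shoot x)" by (rule shoot_strict_mono[OF x])
  show "(\<lambda>n. shoot (y n) a) \<longlonglongrightarrow> shoot x a" for a
    by (intro shoot_tendsto x y A_tendsto[OF x y lim] calF_tendsto[OF x y lim] tendsto_const)
  show "shoot (y n) (\<xi> (y n)) = \<nu>2 - \<nu>1" for n by (rule shoot_xi[OF y])
  show "shoot x (\<xi> x) = \<nu>2 - \<nu>1" by (rule shoot_xi[OF x])
qed

lemma calP_eq: "P x t = \<nu>1 + (LINT s:{0..t}|lborel. integrand x (\<xi> x) s)"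
  unfolding calP_def integrand_def ..

lemma calP_0: "P x 0 = \<nu>1"
  unfolding calP_eq by (simp add: set_integral_singleton)

lemma calP_is_wderiv: "W1p T p x \<Longrightarrow> is_wderiv T p (P x) (integrand x (\<xi> x))"
  unfolding is_wderiv_def calP_0 by (simp add: Lp_integrand calP_eq)

lemma calP_tendsto:
  assumes x: "W1p T p x" and y: "\<And>n. W1p T p (y n)"
    and lim: "(\<lambda>n. W1p_norm T p (\<lambda>t. y n t - x t)) \<longlonglongrightarrow> 0"
  shows "(\<lambda>n. W1p_norm T p (\<lambda>t. P (y n) t - P x t)) \<longlonglongrightarrow> 0"
proof -
  note limits = A_tendsto[OF x y lim] calF_tendsto[OF x y lim] xi_tendsto[OF x y lim]
  define d where "d n = (\<lambda>t. integrand (y n) (\<xi> (y n)) t - integrand x (\<xi> x) t)" for n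
  have "(\<lambda>n. L1_norm T (d n)) \<longlonglongrightarrow> 0"
    using integrand_tendsto_Lq[OF x y limits zero_less_one Lp_imp_Lp_one[OF _ h1_inv]] p
    unfolding L1_norm_def d_def by simp
  moreover have "(\<lambda>n. Lp_norm T p (d n)) \<longlonglongrightarrow> 0"
    unfolding Lp_norm_def d_def using p
    by (intro tendsto_zero_powrI[OF integrand_tendsto_Lq[OF x y limits _ h1_inv]])
       (auto intro!: always_eventually set_integral_nonneg)
  ultimately have bound_lim: "(\<lambda>n. T powr (1 / p) * L1_norm T (d n) + Lp_norm T p (d n)) \<longlonglongrightarrow> 0"
    using tendsto_add[OF tendsto_mult_right_zero] by fastforce
  have "is_wderiv T p (\<lambda>t. P (y n) t - P x t) (d n)" for n
    unfolding d_def using p by (intro is_wderiv_diff calP_is_wderiv x y) simp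
  then have "W1p_norm T p (\<lambda>t. P (y n) t - P x t) \<le> T powr (1 / p) * L1_norm T (d n) + Lp_norm T p (d n)" for n
    using T p by (intro W1p_norm_le) (auto simp: calP_0)
  then show ?thesis
    by (intro tendsto_sandwich[OF _ _ tendsto_const bound_lim] always_eventually allI W1p_norm_nonneg)
qed

end

theorem lemma2p9:
  fixes T p \<nu>1 \<nu>2 :: real
    and \<Phi> :: "real \<Rightarrow> real"
    and A F :: "(real \<Rightarrow> real) \<Rightarrow> (real \<Rightarrow> real)"
    and h1 h2 \<psi> :: "real \<Rightarrow> real"
  assumes T: "T > 0" and p: "p > 1"
    and Phi_mono: "strict_mono \<Phi>"
    and Phi_homeo: "homeomorphism UNIV UNIV \<Phi> (inv \<Phi>)"
    and A_cont_fun: "\<And>x. W1p T p x \<Longrightarrow> continuous_on {0..T} (A x)"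
    and A_cont: "\<And>x \<epsilon>. W1p T p x \<Longrightarrow> \<epsilon> > 0 \<Longrightarrow> \<exists>\<delta>>0. \<forall>y. W1p T p y \<and>
                   W1p_norm T p (\<lambda>t. y t - x t) < \<delta> \<longrightarrow> (\<forall>t\<in>{0..T}. \<bar>A y t - A x t\<bar> < \<epsilon>)"
    and h1_cont: "continuous_on {0..T} h1" and h2_cont: "continuous_on {0..T} h2"
    and h1_nn: "\<forall>t\<in>{0..T}. h1 t \<ge> 0" and h2_nn: "\<forall>t\<in>{0..T}. h2 t \<ge> 0"
    and h1_pos: "AE t in lborel. t \<in> {0..T} \<longrightarrow> h1 t > 0"
    and h2_pos: "AE t in lborel. t \<in> {0..T} \<longrightarrow> h2 t > 0"
    and h1_inv: "Lp T p (\<lambda>t. 1 / h1 t)" and h2_inv: "Lp T p (\<lambda>t. 1 / h2 t)"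
    and A_bounds: "\<And>x t. W1p T p x \<Longrightarrow> t \<in> {0..T} \<Longrightarrow> h1 t \<le> A x t \<and> A x t \<le> h2 t"
    and F_L1: "\<And>x. W1p T p x \<Longrightarrow> set_integrable lborel {0..T} (F x)"
    and F_cont: "\<And>x \<epsilon>. W1p T p x \<Longrightarrow> \<epsilon> > 0 \<Longrightarrow> \<exists>\<delta>>0. \<forall>y. W1p T p y \<and>
                   W1p_norm T p (\<lambda>t. y t - x t) < \<delta> \<longrightarrow> L1_norm T (\<lambda>t. F y t - F x t) < \<epsilon>"
    and psi_nn: "\<forall>t. \<psi> t \<ge> 0" and psi_L1: "set_integrable lborel {0..T} \<psi>"
    and F_bound: "\<And>x. W1p T p x \<Longrightarrow> AE t in lborel. t \<in> {0..T} \<longrightarrow> \<bar>F x t\<bar> \<le> \<psi> t"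
  shows "(\<forall>x. W1p T p x \<longrightarrow> W1p T p (calP T \<Phi> A F \<nu>1 \<nu>2 x)) \<and>
         (\<forall>x \<epsilon>. W1p T p x \<and> \<epsilon> > 0 \<longrightarrow> (\<exists>\<delta>>0. \<forall>y. W1p T p y \<and>
            W1p_norm T p (\<lambda>t. y t - x t) < \<delta> \<longrightarrow>
            W1p_norm T p (\<lambda>t. calP T \<Phi> A F \<nu>1 \<nu>2 y t - calP T \<Phi> A F \<nu>1 \<nu>2 x t) < \<epsilon>))"
proof -
  interpret calP_setting T p \<nu>1 \<nu>2 \<Phi> A F h1 h2 \<psi>
    by (unfold_locales; fact)
  show ?thesis
  proof (intro conjI allI impI)
    fix x assume "W1p T p x"
    then have "is_wderiv T p (P x) (integrand x (\<xi> x))" by (rule calP_is_wderiv)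
    then show "W1p T p (P x)" unfolding W1p_def by blast
  next
    fix x and \<epsilon> :: real assume "W1p T p x \<and> \<epsilon> > 0"
    then show "\<exists>\<delta>>0. \<forall>y. W1p T p y \<and> W1p_norm T p (\<lambda>t. y t - x t) < \<delta> \<longrightarrow>
                 W1p_norm T p (\<lambda>t. P y t - P x t) < \<epsilon>"
      by (intro eps_delta_if_sequentially[where S = "W1p T p"]) (auto intro: calP_tendsto W1p_norm_nonneg)
  qed
qed

end
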